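(* For $n\ge3$: $\mathrm{St}(\mathfrak a_0^\circ(n))=\{I,X\}^{\otimes n}\cup\{Y,Z\}^{\otimes n}$; $\mathrm{St}(\mathfrak a_2^\circ(n))=\{P_I,P_{XY},P_{YX},P_Z\}$ for $n$ even and $\{P_I,P_Z\}$ for $n$ odd; $\mathrm{St}(\mathfrak a_3^\circ(n))=\mathrm{St}(\mathfrak a_6^\circ(n))=\{P_I,P_X,P_{YZ},P_{ZY}\}$ for $n$ even and $\{P_I,P_X\}$ for $n$ odd; $\mathrm{St}(\mathfrak a_4^\circ(n))=\mathrm{St}(\mathfrak a_7^\circ(n))=\{P_I,P_X,P_Y,P_Z\}$; $\mathrm{St}(\mathfrak a_5^\circ(n))=\mathrm{St}(\mathfrak a_{10}^\circ(n))=\{P_I,P_{XYZ},P_{YZX},P_{ZXY}\}$ if $n\equiv0\pmod3$ and $\{P_I\}$ if $n\equiv\pm1\pmod 3$; $\mathrm{St}(\mathfrak a_8^\circ(n))=\{P_I,P_Y\}$; $\mathrm{St}(\mathfrak a_{13}^\circ(n))=\mathrm{St}(\mathfrak a_{20}^\circ(n))=\{P_I,P_X\}$; $\mathrm{St}(\mathfrak a_{14}^\circ(n))=\{P_I,P_Z\}$; $\mathrm{St}(\mathfrak b_0^\circ(n))=\mathrm{St}(\mathfrak b_1^\circ(n))=\{I,X\}^{\otimes n}$; $\mathrm{St}(\mathfrak a_k^\circ(n))=\mathrm{St}(\mathfrak b_l^\circ(n))=\{P_I\}$ for $k\in\{9,11,12,15,16,17,18,19,21,22\}$ and $l\in\{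2,3,4\}$.
   Context: Pauli matrices $I,X,Y,Z$; $\mathcal P_n$ is the set of length-$n$ Pauli strings. $A_iB_j$ denotes the string with $A$ at position $i$, $B$ at $j$, $I$ elsewhere. For a word $w$ over $\{I,X,Y,Z\}$, $P_w\in\mathcal P_n$ is the repetition $www\cdots$ truncated to length $n$ (e.g. $P_I=I^{\otimes n}$, $P_X=X^{\otimes n}$, $P_{XYZ}=XYZXYZ\cdots$). The stabilizer $\mathrm{St}(\mathfrak s)$ is the set of all $P\in\mathcal P_n$ commuting with every element of $\mathfrak s$. For a set $S$ of Pauli strings, $\mathrm{Lie}\langle S\rangle$ is the smallest real Lie subalgebra of $\mathfrak u(2^n)$ containing $\{iP:P\in S\}$. For a set $G$ of two-qubit strings, $G^\circ(n)=\mathrm{Lie}\langle A_jB_{j+1}\ (1\le j\le n-1),\ A_nB_1: AB\in G\rangle$. Generating sets: $\mathfrak a_0=\{XX\}$, $\mathfrak a_2=\{XY,YX\}$, $\mathfrak a_3=\{XX,YZ\}$, $\mathfrak a_4=\{XX,YY\}$, $\mathfrak a_5=\{XY,YZ\}$, $\mathfrak a_6=\{XX,YZ,ZY\}$, $\mathfrak a_7=\{XX,YY,ZZ\}$, $\mathfrak a_8=\{XX,XZ\}$, $\mathfrak a_9=\{XY,XZ\}$, $\mathfrak a_{10}=\{XY,YZ,ZX\}$, $\mathfrak a_{11}=\{XY,YX,YZ\}$, $\mathfrak a_{12}=\{XX,XY,YZ\}$, $\mathfrak a_{13}=\{XX,YY,YZ\}$, $\mathfrak a_{14}=\{XX,YY,XY\}$,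 $\mathfrak a_{15}=\{XX,XY,XZ\}$, $\mathfrak a_{16}=\{XY,YX,YZ,ZY\}$, $\mathfrak a_{17}=\{XX,XY,ZX\}$, $\mathfrak a_{18}=\{XX,XZ,YY,ZY\}$, $\mathfrak a_{19}=\{XX,XY,ZX,YZ\}$, $\mathfrak a_{20}=\{XX,YY,ZZ,ZY\}$, $\mathfrak a_{21}=\{XX,YY,XY,ZX\}$, $\mathfrak a_{22}=\{XX,XY,XZ,YX\}$, $\mathfrak b_0=\{XI,IX\}$, $\mathfrak b_1=\{XX,XI,IX\}$, $\mathfrak b_2=\{XY,XI,IX\}$, $\mathfrak b_3=\{XI,YI,IX,IY\}$, $\mathfrak b_4=\{XX,XY,XI,IX\}$. *)

theory Defs
  imports "Jordan_Normal_Form.Matrix"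
begin

datatype pauli = PI | PX | PY | PZ

definition pauli_mat :: "pauli \<Rightarrow> complex mat" where
  "pauli_mat p = (case p of
      PI \<Rightarrow> mat_of_rows_list 2 [[1, 0], [0, 1]]
    | PX \<Rightarrow> mat_of_rows_list 2 [[0, 1], [1, 0]]
    | PY \<Rightarrow> mat_of_rows_list 2 [[0, - \<i>], [\<i>, 0]]
    | PZ \<Rightarrow> mat_of_rows_list 2 [[1, 0], [0, -1]])"

definition kron :: "complex mat \<Rightarrow> complex mat \<Rightarrow> complex mat" where
  "kron A B = mat (dim_row A * dim_row B) (dim_col A * dim_col B)
     (\<lambda>(i, j). A $$ (i div dim_row B, j div dim_col B) * B $$ (i mod dim_row B, j mod dim_col B))"

definition pstring_mat :: "pauli list \<Rightarrow> complex mat" where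
  "pstring_mat w = foldr kron (map pauli_mat w) (1\<^sub>m 1)"

definition pauli_strings :: "nat \<Rightarrow> pauli list set" where
  "pauli_strings n = {w. length w = n}"

inductive_set lie_gen :: "complex mat set \<Rightarrow> complex mat set" for S where
  gen: "A \<in> S \<Longrightarrow> A \<in> lie_gen S"
| add: "A \<in> lie_gen S \<Longrightarrow> B \<in> lie_gen S \<Longrightarrow> A + B \<in> lie_gen S"
| smult: "A \<in> lie_gen S \<Longrightarrow> complex_of_real c \<cdot>\<^sub>m A \<in> lie_gen S"
| bracket: "A \<in> lie_gen S \<Longrightarrow> B \<in> lie_gen S \<Longrightarrow> A * B - B * A \<in> lie_gen S"

definition Lie :: "pauli list set \<Rightarrow> complex mat set" where
  "Lie S = lie_gen ((\<lambda>P. \<i> \<cdot>\<^sub>m pstring_mat P) ` S)"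

definition St :: "nat \<Rightarrow> complex mat set \<Rightarrow> pauli list set" where
  "St n \<s> = {P \<in> pauli_strings n. \<forall>A \<in> \<s>. pstring_mat P * A = A * pstring_mat P}"

text \<open>A_i B_j (0-indexed positions i, j, i \<noteq> j) in a string of length n.\<close>
definition two_site :: "nat \<Rightarrow> pauli \<Rightarrow> nat \<Rightarrow> pauli \<Rightarrow> nat \<Rightarrow> pauli list" where
  "two_site n A i B j = (replicate n PI)[i := A, j := B]"

definition circ :: "(pauli \<times> pauli) set \<Rightarrow> nat \<Rightarrow> complex mat set" where
  "circ G n = Lie ({two_site n A j B (j + 1) | A B j. (A, B) \<in> G \<and> j < n - 1}
                   \<union> {two_site n A (n - 1) B 0 | A B. (A, B) \<in> G})"

definition Prep :: "nat \<Rightarrow> pauli list \<Rightarrow> pauli list" where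
  "Prep n w = map (\<lambda>k. w ! (k mod length w)) [0..<n]"

definition tensor_pow :: "pauli set \<Rightarrow> nat \<Rightarrow> pauli list set" where
  "tensor_pow T n = {w. length w = n \<and> set w \<subseteq> T}"

definition "a0 = {(PX, PX)}"
definition "a2 = {(PX, PY), (PY, PX)}"
definition "a3 = {(PX, PX), (PY, PZ)}"
definition "a4 = {(PX, PX), (PY, PY)}"
definition "a5 = {(PX, PY), (PY, PZ)}"
definition "a6 = {(PX, PX), (PY, PZ), (PZ, PY)}"
definition "a7 = {(PX, PX), (PY, PY), (PZ, PZ)}"
definition "a8 = {(PX, PX), (PX, PZ)}"
definition "a9 = {(PX, PY), (PX, PZ)}"
definition "a10 = {(PX, PY), (PY, PZ), (PZ, PX)}"
definition "a11 = {(PX, PY), (PY, PX), (PY, PZ)}"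
definition "a12 = {(PX, PX), (PX, PY), (PY, PZ)}"
definition "a13 = {(PX, PX), (PY, PY), (PY, PZ)}"
definition "a14 = {(PX, PX), (PY, PY), (PX, PY)}"
definition "a15 = {(PX, PX), (PX, PY), (PX, PZ)}"
definition "a16 = {(PX, PY), (PY, PX), (PY, PZ), (PZ, PY)}"
definition "a17 = {(PX, PX), (PX, PY), (PZ, PX)}"
definition "a18 = {(PX, PX), (PX, PZ), (PY, PY), (PZ, PY)}"
definition "a19 = {(PX, PX), (PX, PY), (PZ, PX), (PY, PZ)}"
definition "a20 = {(PX, PX), (PY, PY), (PZ, PZ), (PZ, PY)}"
definition "a21 = {(PX, PX), (PY, PY), (PX, PY), (PZ, PX)}"
definition "a22 = {(PX, PX), (PX, PY), (PX, PZ), (PY, PX)}"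
definition "b0 = {(PX, PI), (PI, PX)}"
definition "b1 = {(PX, PX), (PX, PI), (PI, PX)}"
definition "b2 = {(PX, PY), (PX, PI), (PI, PX)}"
definition "b3 = {(PX, PI), (PY, PI), (PI, PX), (PI, PY)}"
definition "b4 = {(PX, PX), (PX, PY), (PX, PI), (PI, PX)}"

end

theory Submission
  imports Defs
begin

text \<open>A Pauli string Q commutes with iP exactly when Q and P anticommute at an even number of
  sites, and it commutes with a generated Lie algebra as soon as it commutes with the generators.
  For the nearest-neighbour generators A_j B_(j+1) this is a condition on each cyclically adjacent
  pair of letters (Q_j, Q_(j+1)), given by a relation on {I, X, Y, Z} that depends only on G; the
  stabilizer is the set of closed walks of length n in that relation. For the listed generating
  sets this relation is an equivalence or a product relation (a0, b0, b1), or the graph of a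
  permutation, whose closed walks repeat a cycle of length dividing n (a2, a3, a5, a6, a10), or
  acyclic off the diagonal, so that every closed walk is constant (all remaining cases).\<close>

section \<open>Matrices and Kronecker products\<close>

lemma sum_lessThan_mult_div_mod:
  fixes g :: "nat \<Rightarrow> nat \<Rightarrow> 'a::comm_monoid_add"
  assumes "0 < b"
  shows "(\<Sum>k<a * b. g (k div b) (k mod b)) = (\<Sum>i<a. \<Sum>j<b. g i j)"
proof -
  have "(\<Sum>k<a * b. g (k div b) (k mod b)) = (\<Sum>i<a. \<Sum>k\<in>{i * b..<i * b + b}. g (k div b) (k mod b))"
    by (rule sum.nat_group[symmetric])
  also have "\<dots> = (\<Sum>i<a. \<Sum>j<b. g i j)"
  proof (rule sum.cong[OF refl])
    fix i
    have "(\<Sum>k\<in>{i * b..<i * b + b}. g (k div b) (k mod b))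
        = (\<Sum>j\<in>{0..<b}. g ((i * b + j) div b) ((i * b + j) mod b))"
      by (subst sum.atLeastLessThan_shift_0) (simp add: comp_def)
    also have "\<dots> = (\<Sum>j<b. g i j)"
      using assms by (intro sum.cong) auto
    finally show "(\<Sum>k\<in>{i * b..<i * b + b}. g (k div b) (k mod b)) = (\<Sum>j<b. g i j)" .
  qed
  finally show ?thesis .
qed

lemma one_smult_mat [simp]: "(1 :: 'a :: monoid_mult) \<cdot>\<^sub>m A = A"
  by (rule eq_matI) auto

lemma smult_smult_mat: "a \<cdot>\<^sub>m (b \<cdot>\<^sub>m (A :: 'a :: semigroup_mult mat)) = (a * b) \<cdot>\<^sub>m A"
  by (rule eq_matI) (auto simp: mult.assoc)

lemma commute_mult_mat:
  assumes Q: "Q \<in> carrier_mat n n" and A: "A \<in> carrier_mat n n" and B: "B \<in> carrier_mat n n"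
    and "Q * A = A * Q" and "Q * B = B * Q"
  shows "Q * (A * B) = A * B * Q"
proof -
  have "Q * (A * B) = (Q * A) * B" using assoc_mult_mat[OF Q A B] by simp
  also have "\<dots> = A * (Q * B)" using assms(4) assoc_mult_mat[OF A Q B] by simp
  also have "\<dots> = A * B * Q" using assms(5) assoc_mult_mat[OF A B Q] by simp
  finally show ?thesis .
qed

lemma commute_lie_gen:
  assumes "B \<in> lie_gen S" and Q: "Q \<in> carrier_mat N N"
    and S: "\<And>A. A \<in> S \<Longrightarrow> A \<in> carrier_mat N N \<and> Q * A = A * Q"
  shows "B \<in> carrier_mat N N \<and> Q * B = B * Q"
  using assms(1)
proof (induction rule: lie_gen.induct)
  case (gen A)
  then show ?case by (rule S)
next
  case (add A B)
  then show ?case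
    using Q by (auto simp: mult_add_distrib_mat[OF Q] add_mult_distrib_mat[OF _ _ Q])
next
  case (smult A c)
  then show ?case
    using Q by (auto simp: mult_smult_distrib[OF Q] mult_smult_assoc_mat[OF _ Q])
next
  case (bracket A B)
  then have A: "A \<in> carrier_mat N N" and B: "B \<in> carrier_mat N N"
    and QA: "Q * A = A * Q" and QB: "Q * B = B * Q" by auto
  have QAB: "Q * (A * B) = A * B * Q" and QBA: "Q * (B * A) = B * A * Q"
    using commute_mult_mat[OF Q A B QA QB] commute_mult_mat[OF Q B A QB QA] by auto
  have "Q * (A * B - B * A) = Q * (A * B) - Q * (B * A)"
    using A B Q by (subst mult_minus_distrib_mat[where n = N and nc = N]) auto
  also have "\<dots> = A * B * Q - B * A * Q"
    by (simp only: QAB QBA)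
  also have "\<dots> = (A * B - B * A) * Q"
    using A B Q by (subst minus_mult_distrib_mat[where n = N and nr = N]) auto
  finally have "Q * (A * B - B * A) = (A * B - B * A) * Q" .
  moreover have "A * B - B * A \<in> carrier_mat N N"
    using A B by (intro minus_carrier_mat mult_carrier_mat)
  ultimately show ?case by blast
qed

lemma commute_smult_iff:
  fixes Q A :: "'a :: field mat"
  assumes Q: "Q \<in> carrier_mat n n" and A: "A \<in> carrier_mat n n" and c: "c \<noteq> 0"
  shows "Q * (c \<cdot>\<^sub>m A) = (c \<cdot>\<^sub>m A) * Q \<longleftrightarrow> Q * A = A * Q"
proof -
  have "Q * (c \<cdot>\<^sub>m A) = (c \<cdot>\<^sub>m A) * Q \<longleftrightarrow> c \<cdot>\<^sub>m (Q * A) = c \<cdot>\<^sub>m (A * Q)"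
    using Q A by (simp add: mult_smult_distrib[OF Q A] mult_smult_assoc_mat[OF A Q])
  also have "\<dots> \<longleftrightarrow> Q * A = A * Q"
  proof
    assume "c \<cdot>\<^sub>m (Q * A) = c \<cdot>\<^sub>m (A * Q)"
    then have "inverse c \<cdot>\<^sub>m (c \<cdot>\<^sub>m (Q * A)) = inverse c \<cdot>\<^sub>m (c \<cdot>\<^sub>m (A * Q))" by simp
    then show "Q * A = A * Q" using c by (simp add: smult_smult_mat)
  qed simp
  finally show ?thesis .
qed

lemma dim_kron [simp]:
  "dim_row (kron A B) = dim_row A * dim_row B"
  "dim_col (kron A B) = dim_col A * dim_col B"
  by (simp_all add: kron_def)

lemma kron_mult:
  assumes A: "A \<in> carrier_mat a a'" and B: "B \<in> carrier_mat b b'"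
    and C: "C \<in> carrier_mat a' a''" and D: "D \<in> carrier_mat b' b''"
    and pos: "0 < b" "0 < b'" "0 < b''"
  shows "kron A B * kron C D = kron (A * C) (B * D)"
proof (rule eq_matI)
  fix i j assume "i < dim_row (kron (A * C) (B * D))" and "j < dim_col (kron (A * C) (B * D))"
  then have i: "i < a * b" and j: "j < a'' * b''" using A B C D by auto
  have "(kron A B * kron C D) $$ (i, j) = (\<Sum>k<a' * b'. kron A B $$ (i, k) * kron C D $$ (k, j))"
    using A B C D i j by (simp add: scalar_prod_def lessThan_atLeast0)
  also have "\<dots> = (\<Sum>k<a' * b'. (A $$ (i div b, k div b') * B $$ (i mod b, k mod b'))
      * (C $$ (k div b', j div b'') * D $$ (k mod b', j mod b'')))"
    using A B C D i j by (intro sum.cong) (auto simp: kron_def)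
  also have "\<dots> = (\<Sum>k<a'. \<Sum>l<b'. (A $$ (i div b, k) * B $$ (i mod b, l))
      * (C $$ (k, j div b'') * D $$ (l, j mod b'')))"
    by (rule sum_lessThan_mult_div_mod[OF pos(2)])
  also have "\<dots> = (\<Sum>k<a'. A $$ (i div b, k) * C $$ (k, j div b''))
      * (\<Sum>l<b'. B $$ (i mod b, l) * D $$ (l, j mod b''))"
    by (simp add: sum_product mult_ac)
  also have "\<dots> = kron (A * C) (B * D) $$ (i, j)"
    using A B C D i j pos
    by (simp add: kron_def scalar_prod_def lessThan_atLeast0 less_mult_imp_div_less mult.commute)
  finally show "(kron A B * kron C D) $$ (i, j) = kron (A * C) (B * D) $$ (i, j)" .
qed (use A B C D in auto)

lemma kron_smult_left: "kron (c \<cdot>\<^sub>m A) B = c \<cdot>\<^sub>m kron A B"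
  by (rule eq_matI) (auto simp: kron_def less_mult_imp_div_less)

lemma kron_smult_right: "kron A (c \<cdot>\<^sub>m B) = c \<cdot>\<^sub>m kron A B"
proof (rule eq_matI)
  fix i j assume i: "i < dim_row (c \<cdot>\<^sub>m kron A B)" and j: "j < dim_col (c \<cdot>\<^sub>m kron A B)"
  then have "0 < dim_row B" "0 < dim_col B" by (auto intro: gr0I)
  with i j show "kron A (c \<cdot>\<^sub>m B) $$ (i, j) = (c \<cdot>\<^sub>m kron A B) $$ (i, j)"
    by (auto simp: kron_def)
qed auto

lemma kron_one: "0 < b \<Longrightarrow> kron (1\<^sub>m a) (1\<^sub>m b) = 1\<^sub>m (a * b)"
proof (rule eq_matI)
  fix i j assume b: "0 < b" and i: "i < dim_row (1\<^sub>m (a * b))" and j: "j < dim_col (1\<^sub>m (a * b))"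
  then have "i div b < a" "j div b < a" by (auto simp: less_mult_imp_div_less mult.commute)
  moreover have "i div b = j div b \<and> i mod b = j mod b \<longleftrightarrow> i = j"
    by (metis div_mult_mod_eq)
  ultimately show "kron (1\<^sub>m a) (1\<^sub>m b) $$ (i, j) = 1\<^sub>m (a * b) $$ (i, j)"
    using b i j by (auto simp: kron_def)
qed auto

section \<open>Pauli strings\<close>

fun anticommute :: "pauli \<Rightarrow> pauli \<Rightarrow> bool" where
  "anticommute a b \<longleftrightarrow> a \<noteq> PI \<and> b \<noteq> PI \<and> a \<noteq> b"

lemma pauli_mat_carrier: "pauli_mat p \<in> carrier_mat 2 2"
  by (cases p) (auto simp: pauli_mat_def mat_of_rows_list_def)

lemma pauli_mat_mult_commute:
  "pauli_mat p * pauli_mat q = (if anticommute p q then -1 else 1) \<cdot>\<^sub>m (pauli_mat q * pauli_mat p)"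
  by (rule eq_matI; cases p; cases q)
    (auto simp: pauli_mat_def mat_of_rows_list_def scalar_prod_def numeral_2_eq_2 less_Suc_eq)

lemma pauli_mat_square: "pauli_mat p * pauli_mat p = 1\<^sub>m 2"
  by (rule eq_matI; cases p)
    (auto simp: pauli_mat_def mat_of_rows_list_def scalar_prod_def numeral_2_eq_2 less_Suc_eq)

fun anticommuting_sites :: "pauli list \<Rightarrow> pauli list \<Rightarrow> nat" where
  "anticommuting_sites (a # v) (b # w) = (if anticommute a b then 1 else 0) + anticommuting_sites v w"
| "anticommuting_sites _ _ = 0"

lemma pstring_mat_Nil: "pstring_mat [] = 1\<^sub>m 1"
  by (simp add: pstring_mat_def)

lemma pstring_mat_Cons: "pstring_mat (p # w) = kron (pauli_mat p) (pstring_mat w)"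
  by (simp add: pstring_mat_def)

lemma pstring_mat_carrier: "pstring_mat w \<in> carrier_mat (2 ^ length w) (2 ^ length w)"
  by (induction w)
    (auto simp: pstring_mat_Nil pstring_mat_Cons carrier_matD[OF pauli_mat_carrier] intro!: carrier_matI)

lemma pstring_mat_mult_commute:
  "length v = length w \<Longrightarrow>
   pstring_mat v * pstring_mat w = (-1) ^ anticommuting_sites v w \<cdot>\<^sub>m (pstring_mat w * pstring_mat v)"
proof (induction v arbitrary: w)
  case Nil
  then show ?case by (auto simp: pstring_mat_Nil)
next
  case (Cons a v)
  then obtain b w' where w: "w = b # w'" and len: "length v = length w'" by (cases w) auto
  let ?m = "2 ^ length v :: nat"
  have v: "pstring_mat v \<in> carrier_mat ?m ?m" and w': "pstring_mat w' \<in> carrier_mat ?m ?m"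
    using pstring_mat_carrier[of v] pstring_mat_carrier[of w'] len by auto
  have pos: "0 < ?m" by simp
  have "pstring_mat (a # v) * pstring_mat w = kron (pauli_mat a * pauli_mat b) (pstring_mat v * pstring_mat w')"
    unfolding w pstring_mat_Cons by (rule kron_mult[OF pauli_mat_carrier v pauli_mat_carrier w' pos pos pos])
  also have "\<dots> = (-1) ^ anticommuting_sites (a # v) w \<cdot>\<^sub>m
      kron (pauli_mat b * pauli_mat a) (pstring_mat w' * pstring_mat v)"
    by (subst pauli_mat_mult_commute, subst Cons.IH[OF len])
      (simp add: kron_smult_left kron_smult_right smult_smult_mat w)
  also have "kron (pauli_mat b * pauli_mat a) (pstring_mat w' * pstring_mat v) = pstring_mat w * pstring_mat (a # v)"
    unfolding w pstring_mat_Cons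
    by (rule kron_mult[OF pauli_mat_carrier w' pauli_mat_carrier v pos pos pos, symmetric])
  finally show ?case .
qed

lemma pstring_mat_square: "pstring_mat w * pstring_mat w = 1\<^sub>m (2 ^ length w)"
proof (induction w)
  case Nil
  then show ?case by (simp add: pstring_mat_Nil)
next
  case (Cons a w)
  have w: "pstring_mat w \<in> carrier_mat (2 ^ length w) (2 ^ length w)" by (rule pstring_mat_carrier)
  show ?case unfolding pstring_mat_Cons
    by (simp add: kron_mult[OF pauli_mat_carrier w pauli_mat_carrier w] pauli_mat_square Cons.IH kron_one)
qed

text \<open>Two Pauli strings commute or anticommute; if they did both, \<open>(WV)(VW) = 1\<close> would equal
  its own negative.\<close>
lemma pstring_mat_commute_iff:
  assumes len: "length v = length w"
  shows "pstring_mat v * pstring_mat w = pstring_mat w * pstring_mat v \<longleftrightarrow> even (anticommuting_sites v w)"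
proof
  let ?m = "2 ^ length v :: nat" and ?V = "pstring_mat v" and ?W = "pstring_mat w"
  have V: "?V \<in> carrier_mat ?m ?m" and W: "?W \<in> carrier_mat ?m ?m"
    using pstring_mat_carrier[of v] pstring_mat_carrier[of w] len by auto
  assume comm: "?V * ?W = ?W * ?V"
  show "even (anticommuting_sites v w)"
  proof (rule ccontr)
    assume "odd (anticommuting_sites v w)"
    then have anti: "?V * ?W = (-1) \<cdot>\<^sub>m (?V * ?W)"
      using pstring_mat_mult_commute[OF len] comm by simp
    have "(?W * ?V) * (?V * ?W) = ?W * (?V * ?V) * ?W"
      using V W by (simp add: assoc_mult_mat[of _ ?m ?m _ ?m _ ?m])
    also have "\<dots> = 1\<^sub>m ?m"
      using V W pstring_mat_square[of v] pstring_mat_square[of w] len by simp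
    finally have square: "(?W * ?V) * (?V * ?W) = 1\<^sub>m ?m" .
    have "(?W * ?V) * (?V * ?W) = (-1) \<cdot>\<^sub>m ((?W * ?V) * (?V * ?W))"
      using V W by (subst anti) (simp add: mult_smult_distrib[of _ ?m ?m _ ?m])
    then have "(1\<^sub>m ?m :: complex mat) $$ (0, 0) = ((-1) \<cdot>\<^sub>m 1\<^sub>m ?m) $$ (0, 0)"
      by (simp only: square)
    then show False by simp
  qed
next
  assume "even (anticommuting_sites v w)"
  then show "pstring_mat v * pstring_mat w = pstring_mat w * pstring_mat v"
    using pstring_mat_mult_commute[OF len] by simp
qed

section \<open>Stabilizers of nearest-neighbour generators\<close>

lemma St_Lie:
  assumes len: "\<And>P. P \<in> S \<Longrightarrow> length P = n"
  shows "St n (Lie S) = {Q. length Q = n \<and> (\<forall>P\<in>S. even (anticommuting_sites Q P))}"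
proof -
  have commute_gen: "pstring_mat Q * (\<i> \<cdot>\<^sub>m pstring_mat P) = (\<i> \<cdot>\<^sub>m pstring_mat P) * pstring_mat Q
      \<longleftrightarrow> even (anticommuting_sites Q P)"
    if "length Q = n" and "P \<in> S" for Q P
    using that len[of P] pstring_mat_carrier[of Q] pstring_mat_carrier[of P]
    by (simp add: commute_smult_iff pstring_mat_commute_iff)
  show ?thesis
  proof (intro equalityI subsetI)
    fix Q assume "Q \<in> St n (Lie S)"
    then have Q: "length Q = n" by (simp add: St_def pauli_strings_def)
    have "pstring_mat Q * (\<i> \<cdot>\<^sub>m pstring_mat P) = (\<i> \<cdot>\<^sub>m pstring_mat P) * pstring_mat Q" if "P \<in> S" for P
      using that \<open>Q \<in> St n (Lie S)\<close> by (auto simp: St_def Lie_def intro: lie_gen.gen)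
    with Q commute_gen show "Q \<in> {Q. length Q = n \<and> (\<forall>P\<in>S. even (anticommuting_sites Q P))}"
      by auto
  next
    fix Q assume "Q \<in> {Q. length Q = n \<and> (\<forall>P\<in>S. even (anticommuting_sites Q P))}"
    then have Q: "length Q = n" and even: "\<forall>P\<in>S. even (anticommuting_sites Q P)" by auto
    have "B \<in> carrier_mat (2 ^ n) (2 ^ n) \<and> pstring_mat Q * B = B * pstring_mat Q" if "B \<in> Lie S" for B
      using that unfolding Lie_def
    proof (rule commute_lie_gen)
      show "pstring_mat Q \<in> carrier_mat (2 ^ n) (2 ^ n)" using Q pstring_mat_carrier[of Q] by simp
    next
      fix A assume "A \<in> (\<lambda>P. \<i> \<cdot>\<^sub>m pstring_mat P) ` S"
      then obtain P where "P \<in> S" and "A = \<i> \<cdot>\<^sub>m pstring_mat P" by auto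
      then show "A \<in> carrier_mat (2 ^ n) (2 ^ n) \<and> pstring_mat Q * A = A * pstring_mat Q"
        using Q even commute_gen len[of P] pstring_mat_carrier[of P] by auto
    qed
    then show "Q \<in> St n (Lie S)" using Q by (auto simp: St_def pauli_strings_def)
  qed
qed

lemma circ_eq_Lie:
  assumes n: "0 < n"
  shows "circ G n = Lie {two_site n A j B (Suc j mod n) | A B j. (A, B) \<in> G \<and> j < n}"
proof -
  have "{two_site n A j B (j + 1) | A B j. (A, B) \<in> G \<and> j < n - 1}
      \<union> {two_site n A (n - 1) B 0 | A B. (A, B) \<in> G}
    = {two_site n A j B (Suc j mod n) | A B j. (A, B) \<in> G \<and> j < n}" (is "?inner \<union> ?wrap = ?cyclic")
  proof (intro equalityI subsetI)
    fix P assume "P \<in> ?inner \<union> ?wrap"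
    then show "P \<in> ?cyclic"
    proof
      assume "P \<in> ?inner"
      then obtain A B j where "P = two_site n A j B (j + 1)" "(A, B) \<in> G" "j < n - 1"
        by blast
      moreover from \<open>j < n - 1\<close> have "Suc j mod n = j + 1" by simp
      ultimately have "P = two_site n A j B (Suc j mod n)" "(A, B) \<in> G" "j < n" by auto
      then show ?thesis by blast
    next
      assume "P \<in> ?wrap"
      then obtain A B where "P = two_site n A (n - 1) B (Suc (n - 1) mod n)" "(A, B) \<in> G"
        using n by auto
      moreover have "n - 1 < n" using n by simp
      ultimately show ?thesis by blast
    qed
  next
    fix P assume "P \<in> ?cyclic"
    then obtain A B j where P: "P = two_site n A j B (Suc j mod n)" "(A, B) \<in> G" "j < n" by blast
    show "P \<in> ?inner \<union> ?wrap"
    proof (cases "j < n - 1")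
      case True
      then show ?thesis using P by auto
    next
      case False
      with P have "j = n - 1" by simp
      with n P have "P = two_site n A (n - 1) B 0" by simp
      with P show ?thesis by blast
    qed
  qed
  then show ?thesis by (simp add: circ_def)
qed

lemma length_two_site [simp]: "length (two_site n A j B k) = n"
  by (simp add: two_site_def)

lemma anticommuting_sites_eq_sum:
  "length v = length w \<Longrightarrow>
   anticommuting_sites v w = (\<Sum>i<length v. if anticommute (v ! i) (w ! i) then 1 else 0)"
proof (induction v arbitrary: w)
  case (Cons a v)
  then obtain b w' where "w = b # w'" and "length v = length w'" by (cases w) auto
  with Cons.IH show ?case
    by (simp add: sum.lessThan_Suc_shift del: anticommute.simps sum.lessThan_Suc)
qed simp

lemma even_anticommuting_sites_two_site:
  assumes len: "length Q = n" and "j < n" "k < n" "j \<noteq> k"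
  shows "even (anticommuting_sites Q (two_site n A j B k)) \<longleftrightarrow> (anticommute (Q ! j) A \<longleftrightarrow> anticommute (Q ! k) B)"
proof -
  have "anticommuting_sites Q (two_site n A j B k)
      = (\<Sum>i<n. if anticommute (Q ! i) (two_site n A j B k ! i) then 1 else 0)"
    using len by (simp add: anticommuting_sites_eq_sum del: anticommute.simps)
  also have "\<dots> = (\<Sum>i<n. (if i = j \<and> anticommute (Q ! j) A then 1 else 0)
      + (if i = k \<and> anticommute (Q ! k) B then 1 else 0))"
    using assms by (intro sum.cong) (auto simp: two_site_def nth_list_update)
  also have "\<dots> = (if anticommute (Q ! j) A then 1 else 0) + (if anticommute (Q ! k) B then 1 else 0)"
    using assms by (simp add: sum.distrib del: anticommute.simps)
  finally show ?thesis by (simp del: anticommute.simps)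
qed

definition pair_compatible :: "(pauli \<times> pauli) set \<Rightarrow> pauli \<Rightarrow> pauli \<Rightarrow> bool" where
  "pair_compatible G a b \<longleftrightarrow> (\<forall>(A, B) \<in> G. anticommute a A \<longleftrightarrow> anticommute b B)"

definition cyclic_chain :: "('a \<Rightarrow> 'a \<Rightarrow> bool) \<Rightarrow> 'a list \<Rightarrow> bool" where
  "cyclic_chain R xs \<longleftrightarrow> (\<forall>j < length xs. R (xs ! j) (xs ! (Suc j mod length xs)))"

lemma St_circ_eq_cyclic_chains:
  assumes n: "2 \<le> n"
  shows "St n (circ G n) = {Q. length Q = n \<and> cyclic_chain (pair_compatible G) Q}"
proof -
  define gens where "gens = {two_site n A j B (Suc j mod n) | A B j. (A, B) \<in> G \<and> j < n}"
  have next_site: "Suc j mod n < n" "j \<noteq> Suc j mod n" if "j < n" for j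
    using that n by (auto simp: mod_Suc)
  have "(\<forall>P \<in> gens. even (anticommuting_sites Q P))
      \<longleftrightarrow> (\<forall>j<n. \<forall>(A, B) \<in> G. even (anticommuting_sites Q (two_site n A j B (Suc j mod n))))" for Q
    unfolding gens_def by blast
  also have "\<dots> Q \<longleftrightarrow> cyclic_chain (pair_compatible G) Q" if Q: "length Q = n" for Q
    using even_anticommuting_sites_two_site[OF Q _ next_site]
    by (simp add: cyclic_chain_def pair_compatible_def Q del: anticommute.simps)
  finally have chain_iff: "length Q = n \<Longrightarrow>
      (\<forall>P \<in> gens. even (anticommuting_sites Q P)) \<longleftrightarrow> cyclic_chain (pair_compatible G) Q" for Q .
  have "circ G n = Lie gens" using n by (simp add: circ_eq_Lie gens_def)
  moreover have "St n (Lie gens) = {Q. length Q = n \<and> (\<forall>P \<in> gens. even (anticommuting_sites Q P))}"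
    by (rule St_Lie) (auto simp: gens_def)
  ultimately show ?thesis using chain_iff by auto
qed

section \<open>Cyclic chains of a relation\<close>

lemma cyclic_chain_step:
  assumes "cyclic_chain R xs" and "Suc j < length xs"
  shows "R (xs ! j) (xs ! Suc j)"
proof -
  from assms(2) have "j < length xs" by simp
  with assms(1) have "R (xs ! j) (xs ! (Suc j mod length xs))"
    unfolding cyclic_chain_def by blast
  with assms(2) show ?thesis by simp
qed

lemma cyclic_chain_wrap:
  assumes "cyclic_chain R xs" and "xs \<noteq> []"
  shows "R (xs ! (length xs - 1)) (xs ! 0)"
proof -
  from assms(2) have "length xs - 1 < length xs" by simp
  with assms(1) have "R (xs ! (length xs - 1)) (xs ! (Suc (length xs - 1) mod length xs))"
    unfolding cyclic_chain_def by blast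
  moreover from assms(2) have "Suc (length xs - 1) mod length xs = 0" by simp
  ultimately show ?thesis by simp
qed

lemma cyclic_chain_rank_constant:
  fixes r :: "'a \<Rightarrow> 'b :: linorder"
  assumes rank: "\<And>a b. R a b \<Longrightarrow> a = b \<or> r b < r a"
    and chain: "cyclic_chain R xs" and j: "j < length xs"
  shows "xs ! j = xs ! 0"
proof -
  have step: "R (xs ! k) (xs ! Suc k)" if "Suc k < length xs" for k
    using cyclic_chain_step[OF chain that] .
  have descend: "r (xs ! k) \<le> r (xs ! i)" if "i \<le> k" "k < length xs" for i k
    using that
  proof (induction k)
    case (Suc k)
    show ?case
    proof (cases "i = Suc k")
      case False
      with Suc.prems have "r (xs ! k) \<le> r (xs ! i)" by (intro Suc.IH) auto
      moreover have "r (xs ! Suc k) \<le> r (xs ! k)"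
        using rank[OF step[OF Suc.prems(2)]] by (auto intro: less_imp_le)
      ultimately show ?thesis by simp
    qed simp
  qed simp
  have "xs \<noteq> []" using j by auto
  from rank[OF cyclic_chain_wrap[OF chain this]]
  have wrap: "r (xs ! 0) \<le> r (xs ! (length xs - 1))" by auto
  have rank_eq: "r (xs ! k) = r (xs ! 0)" if "k < length xs" for k
  proof (rule antisym)
    show "r (xs ! k) \<le> r (xs ! 0)" using descend[of 0 k] that by simp
    have "r (xs ! (length xs - 1)) \<le> r (xs ! k)" using descend[of k "length xs - 1"] that by simp
    with wrap show "r (xs ! 0) \<le> r (xs ! k)" by (rule order.trans)
  qed
  from j show ?thesis
  proof (induction j)
    case (Suc j)
    then have "Suc j < length xs" "j < length xs" by simp_all
    with rank[OF step] rank_eq have "xs ! j = xs ! Suc j" by fastforce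
    with Suc show ?case by simp
  qed simp
qed

lemma cyclic_chains_rank:
  fixes r :: "'a \<Rightarrow> 'b :: linorder"
  assumes rank: "\<And>a b. R a b \<Longrightarrow> a = b \<or> r b < r a" and n: "0 < n"
  shows "{xs. length xs = n \<and> cyclic_chain R xs} = (\<lambda>c. replicate n c) ` {c. R c c}"
proof (intro equalityI subsetI)
  fix xs assume "xs \<in> {xs. length xs = n \<and> cyclic_chain R xs}"
  then have len: "length xs = n" and chain: "cyclic_chain R xs" by auto
  have const: "xs ! j = xs ! 0" if "j < n" for j
    using cyclic_chain_rank_constant[OF rank chain, of j] that len by simp
  have "xs = replicate n (xs ! 0)"
  proof (rule nth_equalityI)
    fix i assume "i < length xs"
    then show "xs ! i = replicate n (xs ! 0) ! i" using len const[of i] by simp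
  qed (simp add: len)
  moreover have "R (xs ! (n - 1)) (xs ! 0)"
    using cyclic_chain_wrap[OF chain] len n by auto
  moreover have "xs ! (n - 1) = xs ! 0"
    using n by (intro const) simp
  ultimately show "xs \<in> (\<lambda>c. replicate n c) ` {c. R c c}" by auto
next
  fix xs assume "xs \<in> (\<lambda>c. replicate n c) ` {c. R c c}"
  then obtain c where "xs = replicate n c" and "R c c" by blast
  with n show "xs \<in> {xs. length xs = n \<and> cyclic_chain R xs}"
    by (simp add: cyclic_chain_def)
qed

lemma cyclic_chain_kernel_iff:
  assumes "\<And>a b. R a b \<longleftrightarrow> g a = g b"
  shows "cyclic_chain R xs \<longleftrightarrow> (\<forall>x \<in> set xs. \<forall>y \<in> set xs. g x = g y)"
proof
  assume chain: "cyclic_chain R xs"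
  have "g (xs ! j) = g (xs ! 0)" if "j < length xs" for j
    using that
  proof (induction j)
    case (Suc j)
    then show ?case using cyclic_chain_step[OF chain Suc.prems] assms by simp
  qed simp
  then show "\<forall>x \<in> set xs. \<forall>y \<in> set xs. g x = g y"
    by (metis in_set_conv_nth)
next
  assume "\<forall>x \<in> set xs. \<forall>y \<in> set xs. g x = g y"
  moreover have "Suc j mod length xs < length xs" if "j < length xs" for j
    using that by (cases xs) auto
  ultimately show "cyclic_chain R xs"
    unfolding cyclic_chain_def assms by (simp add: nth_mem)
qed

lemma cyclic_chain_product_iff:
  assumes "\<And>a b. R a b \<longleftrightarrow> P a \<and> P b"
  shows "cyclic_chain R xs \<longleftrightarrow> (\<forall>x \<in> set xs. P x)"
  unfolding cyclic_chain_def assms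
proof
  assume "\<forall>j<length xs. P (xs ! j) \<and> P (xs ! (Suc j mod length xs))"
  then show "\<forall>x \<in> set xs. P x" by (auto simp: in_set_conv_nth)
next
  assume all: "\<forall>x \<in> set xs. P x"
  have "Suc j mod length xs < length xs" if "j < length xs" for j
    using that by (cases xs) auto
  with all show "\<forall>j<length xs. P (xs ! j) \<and> P (xs ! (Suc j mod length xs))"
    by (blast intro: nth_mem)
qed

lemma length_Prep [simp]: "length (Prep n w) = n"
  by (simp add: Prep_def)

lemma nth_Prep: "j < n \<Longrightarrow> Prep n w ! j = w ! (j mod length w)"
  by (simp add: Prep_def)

lemma Prep_singleton: "Prep n [c] = replicate n c"
  by (simp add: Prep_def map_replicate_const)

lemma cyclic_chain_follows_cycle:
  assumes f: "\<And>a b. R a b \<longleftrightarrow> b = f a"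
    and w: "w \<noteq> []" "\<And>i. i < length w \<Longrightarrow> w ! (Suc i mod length w) = f (w ! i)"
    and chain: "cyclic_chain R xs" and start: "xs ! 0 = w ! 0" and n: "length xs = n" "0 < n"
  shows "xs = Prep n w" and "w ! (n mod length w) = w ! 0"
proof -
  let ?p = "length w"
  have "0 < ?p" using w(1) by simp
  have follows: "xs ! j = w ! (j mod ?p)" if "j < n" for j
    using that
  proof (induction j)
    case (Suc j)
    have "xs ! Suc j = f (w ! (j mod ?p))"
      using cyclic_chain_step[OF chain] f Suc n by simp
    also have "\<dots> = w ! (Suc j mod ?p)"
      using w(2)[of "j mod ?p"] \<open>0 < ?p\<close> by (simp add: mod_Suc_eq)
    finally show ?case .
  qed (simp add: start)
  then show "xs = Prep n w"
    using n by (intro nth_equalityI) (simp_all add: nth_Prep)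
  have "w ! 0 = f (xs ! (n - 1))"
    using cyclic_chain_wrap[OF chain] f start n by auto
  also have "\<dots> = w ! (n mod ?p)"
    using follows[of "n - 1"] w(2)[of "(n - 1) mod ?p"] \<open>0 < ?p\<close> n by (simp add: mod_Suc_eq)
  finally show "w ! (n mod ?p) = w ! 0" ..
qed

lemma cyclic_chain_Prep_cycle:
  assumes f: "\<And>a b. R a b \<longleftrightarrow> b = f a"
    and w: "w \<noteq> []" "\<And>i. i < length w \<Longrightarrow> w ! (Suc i mod length w) = f (w ! i)"
    and dvd: "length w dvd n"
  shows "cyclic_chain R (Prep n w)"
  unfolding cyclic_chain_def f
proof (intro allI impI)
  fix j assume "j < length (Prep n w)"
  then have j: "j < n" by simp
  have "Suc j mod n mod length w = Suc j mod length w"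
    using dvd by (rule mod_mod_cancel)
  also have "\<dots> = Suc (j mod length w) mod length w"
    by (rule mod_Suc_eq[symmetric])
  finally have "Prep n w ! (Suc j mod length (Prep n w)) = w ! (Suc (j mod length w) mod length w)"
    using j by (simp add: nth_Prep)
  also have "\<dots> = f (Prep n w ! j)"
    using w j by (simp add: nth_Prep)
  finally show "Prep n w ! (Suc j mod length (Prep n w)) = f (Prep n w ! j)" .
qed

lemma cyclic_chains_permutation:
  assumes f: "\<And>a b. R a b \<longleftrightarrow> b = f a"
    and cycles: "\<And>w. w \<in> set ws \<Longrightarrow>
      distinct w \<and> w \<noteq> [] \<and> (\<forall>i < length w. w ! (Suc i mod length w) = f (w ! i))"
    and cover: "\<And>c. \<exists>w \<in> set ws. w ! 0 = c"
    and n: "0 < n"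
  shows "{xs. length xs = n \<and> cyclic_chain R xs} = Prep n ` set (filter (\<lambda>w. length w dvd n) ws)"
proof (intro equalityI subsetI)
  fix xs assume "xs \<in> {xs. length xs = n \<and> cyclic_chain R xs}"
  then have len: "length xs = n" and chain: "cyclic_chain R xs" by auto
  obtain w where w: "w \<in> set ws" "w ! 0 = xs ! 0" using cover by blast
  have cycle: "distinct w" "w \<noteq> []" "\<And>i. i < length w \<Longrightarrow> w ! (Suc i mod length w) = f (w ! i)"
    using cycles[OF w(1)] by auto
  note follows = cyclic_chain_follows_cycle[OF f cycle(2,3) chain w(2)[symmetric] len n]
  have "n mod length w = 0"
    using follows(2) cycle(1,2) by (simp add: nth_eq_iff_index_eq)
  then show "xs \<in> Prep n ` set (filter (\<lambda>w. length w dvd n) ws)"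
    using follows(1) w(1) by (auto simp: dvd_eq_mod_eq_0)
next
  fix xs assume "xs \<in> Prep n ` set (filter (\<lambda>w. length w dvd n) ws)"
  then obtain w where "w \<in> set ws" "length w dvd n" and "xs = Prep n w" by auto
  then show "xs \<in> {xs. length xs = n \<and> cyclic_chain R xs}"
    using cyclic_chain_Prep_cycle[OF f] cycles by auto
qed

section \<open>The individual generating sets\<close>

lemma all_pauli: "(\<forall>p. P p) \<longleftrightarrow> P PI \<and> P PX \<and> P PY \<and> P PZ"
  by (metis pauli.exhaust)

fun pauli_rank :: "pauli \<Rightarrow> int" where
  "pauli_rank PI = 0"
| "pauli_rank PX = 1"
| "pauli_rank PY = 2"
| "pauli_rank PZ = 3"

text \<open>Off the diagonal, each of these compatibility relations only moves strictly down, or only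
  strictly up, in the order \<open>I < X < Y < Z\<close>; so a cyclic chain can never move.\<close>
lemma St_circ_constant_chains:
  assumes n: "2 \<le> n"
    and G: "G \<in> {a4, a7, a8, a13, a14, a20, a9, a11, a12, a15, a16, a17, a18, a19, a21, a22, b2, b3, b4}"
  shows "St n (circ G n) = (\<lambda>c. Prep n [c]) ` {c. pair_compatible G c c}"
proof -
  have "(\<forall>a b. pair_compatible G a b \<longrightarrow> a = b \<or> pauli_rank b < pauli_rank a)
      \<or> (\<forall>a b. pair_compatible G a b \<longrightarrow> a = b \<or> pauli_rank a < pauli_rank b)"
    using G by (elim insertE emptyE; hypsubst)
      (simp_all add: all_pauli pair_compatible_def a4_def a7_def a8_def a13_def a14_def a20_def a9_def
        a11_def a12_def a15_def a16_def a17_def a18_def a19_def a21_def a22_def b2_def b3_def b4_def)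
  then obtain r :: "pauli \<Rightarrow> int" where rank: "\<And>a b. pair_compatible G a b \<Longrightarrow> a = b \<or> r b < r a"
  proof (elim disjE)
    assume "\<forall>a b. pair_compatible G a b \<longrightarrow> a = b \<or> pauli_rank b < pauli_rank a"
    then show thesis by (intro that[of pauli_rank]) blast
  next
    assume "\<forall>a b. pair_compatible G a b \<longrightarrow> a = b \<or> pauli_rank a < pauli_rank b"
    then show thesis by (intro that[of "\<lambda>p. - pauli_rank p"]) auto
  qed
  from n have "0 < n" by simp
  with n show ?thesis
    by (simp add: St_circ_eq_cyclic_chains cyclic_chains_rank[OF rank] Prep_singleton)
qed

lemma St_circ_identity_only:
  assumes n: "2 \<le> n" and G: "G \<in> {a9, a11, a12, a15, a16, a17, a18, a19, a21, a22, b2, b3, b4}"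
  shows "St n (circ G n) = {Prep n [PI]}"
proof -
  have "{c. pair_compatible G c c} = {PI}"
    using G by (elim insertE emptyE; hypsubst)
      (simp_all add: set_eq_iff all_pauli pair_compatible_def a9_def a11_def a12_def a15_def a16_def
        a17_def a18_def a19_def a21_def a22_def b2_def b3_def b4_def)
  moreover have "St n (circ G n) = (\<lambda>c. Prep n [c]) ` {c. pair_compatible G c c}"
    using G by (elim insertE emptyE; simp add: St_circ_constant_chains[OF n])
  ultimately show ?thesis by simp
qed

lemma St_circ_a4_a7:
  assumes n: "2 \<le> n" and G: "G \<in> {a4, a7}"
  shows "St n (circ G n) = {Prep n [PI], Prep n [PX], Prep n [PY], Prep n [PZ]}"
proof -
  have "{c. pair_compatible G c c} = {PI, PX, PY, PZ}"
    using G by (elim insertE emptyE; hypsubst)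
      (simp_all add: set_eq_iff all_pauli pair_compatible_def a4_def a7_def)
  moreover have "St n (circ G n) = (\<lambda>c. Prep n [c]) ` {c. pair_compatible G c c}"
    using G by (elim insertE emptyE; simp add: St_circ_constant_chains[OF n])
  ultimately show ?thesis by simp
qed

lemma St_circ_a13_a20:
  assumes n: "2 \<le> n" and G: "G \<in> {a13, a20}"
  shows "St n (circ G n) = {Prep n [PI], Prep n [PX]}"
proof -
  have "{c. pair_compatible G c c} = {PI, PX}"
    using G by (elim insertE emptyE; hypsubst)
      (simp_all add: set_eq_iff all_pauli pair_compatible_def a13_def a20_def)
  moreover have "St n (circ G n) = (\<lambda>c. Prep n [c]) ` {c. pair_compatible G c c}"
    using G by (elim insertE emptyE; simp add: St_circ_constant_chains[OF n])
  ultimately show ?thesis by simp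
qed

lemma St_circ_a8:
  assumes n: "2 \<le> n"
  shows "St n (circ a8 n) = {Prep n [PI], Prep n [PY]}"
proof -
  have "{c. pair_compatible a8 c c} = {PI, PY}"
    by (simp add: set_eq_iff all_pauli pair_compatible_def a8_def)
  then show ?thesis by (simp add: St_circ_constant_chains[OF n])
qed

lemma St_circ_a14:
  assumes n: "2 \<le> n"
  shows "St n (circ a14 n) = {Prep n [PI], Prep n [PZ]}"
proof -
  have "{c. pair_compatible a14 c c} = {PI, PZ}"
    by (simp add: set_eq_iff all_pauli pair_compatible_def a14_def)
  then show ?thesis by (simp add: St_circ_constant_chains[OF n])
qed

lemma St_circ_permutation:
  assumes "2 \<le> n" and "\<And>a b. pair_compatible G a b \<longleftrightarrow> b = f a"
    and "\<And>w. w \<in> set ws \<Longrightarrow>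
      distinct w \<and> w \<noteq> [] \<and> (\<forall>i < length w. w ! (Suc i mod length w) = f (w ! i))"
    and "\<And>c. \<exists>w \<in> set ws. w ! 0 = c"
  shows "St n (circ G n) = Prep n ` set (filter (\<lambda>w. length w dvd n) ws)"
proof -
  have "0 < n" using assms(1) by simp
  then show ?thesis
    unfolding St_circ_eq_cyclic_chains[OF assms(1)] by (intro cyclic_chains_permutation[OF assms(2-4)])
qed

lemma St_circ_a2:
  assumes n: "2 \<le> n"
  shows "St n (circ a2 n) = (if even n
    then {Prep n [PI], Prep n [PX, PY], Prep n [PY, PX], Prep n [PZ]}
    else {Prep n [PI], Prep n [PZ]})"
proof -
  have "St n (circ a2 n) = Prep n ` set (filter (\<lambda>w. length w dvd n) [[PI], [PX, PY], [PY, PX], [PZ]])"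
  proof (rule St_circ_permutation[OF n, where f = "\<lambda>p. case p of PX \<Rightarrow> PY | PY \<Rightarrow> PX | _ \<Rightarrow> p"])
    show "pair_compatible a2 a b \<longleftrightarrow> b = (case a of PX \<Rightarrow> PY | PY \<Rightarrow> PX | _ \<Rightarrow> a)" for a b
      by (cases a; cases b) (simp_all add: pair_compatible_def a2_def)
    show "\<exists>w \<in> set [[PI], [PX, PY], [PY, PX], [PZ]]. w ! 0 = c" for c
      by (cases c) auto
  qed (auto simp: less_Suc_eq)
  then show ?thesis by (simp add: numeral_2_eq_2[symmetric])
qed

lemma St_circ_a3_a6:
  assumes n: "2 \<le> n" and G: "G \<in> {a3, a6}"
  shows "St n (circ G n) = (if even n
    then {Prep n [PI], Prep n [PX], Prep n [PY, PZ], Prep n [PZ, PY]}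
    else {Prep n [PI], Prep n [PX]})"
proof -
  have "St n (circ G n) = Prep n ` set (filter (\<lambda>w. length w dvd n) [[PI], [PX], [PY, PZ], [PZ, PY]])"
  proof (rule St_circ_permutation[OF n, where f = "\<lambda>p. case p of PY \<Rightarrow> PZ | PZ \<Rightarrow> PY | _ \<Rightarrow> p"])
    show "pair_compatible G a b \<longleftrightarrow> b = (case a of PY \<Rightarrow> PZ | PZ \<Rightarrow> PY | _ \<Rightarrow> a)" for a b
      using G by (elim insertE emptyE; hypsubst) (cases a; cases b; simp add: pair_compatible_def a3_def a6_def)+
    show "\<exists>w \<in> set [[PI], [PX], [PY, PZ], [PZ, PY]]. w ! 0 = c" for c
      by (cases c) auto
  qed (auto simp: less_Suc_eq)
  then show ?thesis by (simp add: numeral_2_eq_2[symmetric])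
qed

lemma St_circ_a5_a10:
  assumes n: "2 \<le> n" and G: "G \<in> {a5, a10}"
  shows "St n (circ G n) = (if n mod 3 = 0
    then {Prep n [PI], Prep n [PX, PY, PZ], Prep n [PY, PZ, PX], Prep n [PZ, PX, PY]}
    else {Prep n [PI]})"
proof -
  have "St n (circ G n) = Prep n ` set (filter (\<lambda>w. length w dvd n) [[PI], [PX, PY, PZ], [PY, PZ, PX], [PZ, PX, PY]])"
  proof (rule St_circ_permutation[OF n, where f = "\<lambda>p. case p of PX \<Rightarrow> PY | PY \<Rightarrow> PZ | PZ \<Rightarrow> PX | PI \<Rightarrow> PI"])
    show "pair_compatible G a b \<longleftrightarrow> b = (case a of PX \<Rightarrow> PY | PY \<Rightarrow> PZ | PZ \<Rightarrow> PX | PI \<Rightarrow> PI)" for a b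
      using G by (elim insertE emptyE; hypsubst) (cases a; cases b; simp add: pair_compatible_def a5_def a10_def)+
    show "\<exists>w \<in> set [[PI], [PX, PY, PZ], [PY, PZ, PX], [PZ, PX, PY]]. w ! 0 = c" for c
      by (cases c) auto
  qed (auto simp: less_Suc_eq)
  then show ?thesis by (simp add: numeral_3_eq_3[symmetric] dvd_eq_mod_eq_0)
qed

lemma St_circ_a0:
  assumes n: "2 \<le> n"
  shows "St n (circ a0 n) = tensor_pow {PI, PX} n \<union> tensor_pow {PY, PZ} n"
proof -
  have "pair_compatible a0 a b \<longleftrightarrow> (a \<in> {PI, PX} \<longleftrightarrow> b \<in> {PI, PX})" for a b
    by (cases a; cases b) (simp_all add: pair_compatible_def a0_def)
  then have "cyclic_chain (pair_compatible a0) Q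
      \<longleftrightarrow> (\<forall>x \<in> set Q. \<forall>y \<in> set Q. x \<in> {PI, PX} \<longleftrightarrow> y \<in> {PI, PX})" for Q
    by (rule cyclic_chain_kernel_iff)
  also have "\<dots> Q \<longleftrightarrow> set Q \<subseteq> {PI, PX} \<or> set Q \<subseteq> {PY, PZ}" for Q
  proof -
    have "x \<in> {PY, PZ} \<longleftrightarrow> x \<notin> {PI, PX}" for x by (cases x) auto
    then show ?thesis by blast
  qed
  finally show ?thesis
    using n by (auto simp: St_circ_eq_cyclic_chains tensor_pow_def)
qed

lemma St_circ_b0_b1:
  assumes n: "2 \<le> n" and G: "G \<in> {b0, b1}"
  shows "St n (circ G n) = tensor_pow {PI, PX} n"
proof -
  have "pair_compatible G a b \<longleftrightarrow> a \<in> {PI, PX} \<and> b \<in> {PI, PX}" for a b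
    using G by (elim insertE emptyE; hypsubst) (cases a; cases b; simp add: pair_compatible_def b0_def b1_def)+
  then have "cyclic_chain (pair_compatible G) Q \<longleftrightarrow> set Q \<subseteq> {PI, PX}" for Q
    by (auto simp: cyclic_chain_product_iff)
  then show ?thesis
    using n by (auto simp: St_circ_eq_cyclic_chains tensor_pow_def)
qed

theorem mainTheorem9:
  fixes n :: nat
  assumes "3 \<le> n"
  shows
   "St n (circ a0 n) = tensor_pow {PI, PX} n \<union> tensor_pow {PY, PZ} n
  \<and> St n (circ a2 n) = (if even n
        then {Prep n [PI], Prep n [PX, PY], Prep n [PY, PX], Prep n [PZ]}
        else {Prep n [PI], Prep n [PZ]})
  \<and> St n (circ a3 n) = (if even n
        then {Prep n [PI], Prep n [PX], Prep n [PY, PZ], Prep n [PZ, PY]}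
        else {Prep n [PI], Prep n [PX]})
  \<and> St n (circ a6 n) = St n (circ a3 n)
  \<and> St n (circ a4 n) = {Prep n [PI], Prep n [PX], Prep n [PY], Prep n [PZ]}
  \<and> St n (circ a7 n) = St n (circ a4 n)
  \<and> St n (circ a5 n) = (if n mod 3 = 0
        then {Prep n [PI], Prep n [PX, PY, PZ], Prep n [PY, PZ, PX], Prep n [PZ, PX, PY]}
        else {Prep n [PI]})
  \<and> St n (circ a10 n) = St n (circ a5 n)
  \<and> St n (circ a8 n) = {Prep n [PI], Prep n [PY]}
  \<and> St n (circ a13 n) = {Prep n [PI], Prep n [PX]}
  \<and> St n (circ a20 n) = St n (circ a13 n)
  \<and> St n (circ a14 n) = {Prep n [PI], Prep n [PZ]}
  \<and> St n (circ b0 n) = tensor_pow {PI, PX} n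
  \<and> St n (circ b1 n) = tensor_pow {PI, PX} n
  \<and> (\<forall>G \<in> {a9, a11, a12, a15, a16, a17, a18, a19, a21, a22, b2, b3, b4}.
        St n (circ G n) = {Prep n [PI]})"
proof -
  from assms have n: "2 \<le> n" by simp
  show ?thesis
    using St_circ_a0[OF n] St_circ_b0_b1[OF n] St_circ_a2[OF n] St_circ_a3_a6[OF n]
      St_circ_a4_a7[OF n] St_circ_a5_a10[OF n] St_circ_a8[OF n] St_circ_a13_a20[OF n]
      St_circ_a14[OF n] St_circ_identity_only[OF n]
    by simp
qed

end
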